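(* Let $a_1,a_2\in\mathbb R$ and set $b_1=a_1-a_2$, $b_2=a_1-1$. Then $(a_1,a_2)$ is a good pair if and only if $(b_1,b_2)$ is a good pair.
   Context: For $x\in\mathbb R$, $[x]_2$ denotes the unique number in $[-1,1)$ congruent to $x$ modulo $2\mathbb Z$. A pair $(a_1,a_2)$ of real numbers is a good pair if none of $a_1,a_2,a_1-a_2$ is an integer and $[a_1]_2\,[a_2]_2>0$ and $|[a_1]_2|<|[a_2]_2|$. *)

theory Defs
  imports Complex_Main
begin

text \<open>[x]_2: the unique number in [-1,1) congruent to x modulo 2Z.\<close>
definition red2 :: "real \<Rightarrow> real" where
  "red2 x = x - 2 * of_int \<lfloor>(x + 1) / 2\<rfloor>"

definition good_pair :: "real \<Rightarrow> real \<Rightarrow> bool" where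
  "good_pair a1 a2 \<longleftrightarrow>
     a1 \<notin> \<int> \<and> a2 \<notin> \<int> \<and> a1 - a2 \<notin> \<int> \<and>
     red2 a1 * red2 a2 > 0 \<and> \<bar>red2 a1\<bar> < \<bar>red2 a2\<bar>"

end

theory Submission
  imports Defs
begin

text \<open>Every ingredient of a good pair is invariant under shifting either argument by an
even integer, so it suffices to treat representatives \<open>x, y \<in> [-1,1)\<close>. The integrality
conditions of the two pairs agree for all reals, since \<open>(a\<^sub>1 - a\<^sub>2) - (a\<^sub>1 - 1) = 1 - a\<^sub>2\<close>.
For the reduced pair, \<open>[x - 1]\<^sub>2\<close> is \<open>x - 1\<close> or \<open>x + 1\<close> according to the sign of \<open>x\<close>, and
\<open>[x - y]\<^sub>2\<close> is \<open>x - y\<close> or \<open>x - y \<mp> 2\<close>; comparing signs and absolute values in these few cases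
gives the equivalence.\<close>

lemma red2_eqI:
  assumes "-1 \<le> x - 2 * of_int k" "x - 2 * of_int k < 1"
  shows "red2 x = x - 2 * of_int k"
proof -
  have "\<lfloor>(x + 1) / 2\<rfloor> = k"
    using assms by (intro floor_unique) (auto simp: field_simps)
  thus ?thesis by (simp add: red2_def)
qed

lemma red2_id: "-1 \<le> x \<Longrightarrow> x < 1 \<Longrightarrow> red2 x = x"
  using red2_eqI[of x 0] by simp

lemma red2_bounds: "-1 \<le> red2 x" "red2 x < 1"
proof -
  have "of_int \<lfloor>(x + 1) / 2\<rfloor> \<le> (x + 1) / 2" "(x + 1) / 2 < of_int \<lfloor>(x + 1) / 2\<rfloor> + 1"
    by linarith+
  thus "-1 \<le> red2 x" "red2 x < 1" by (auto simp: red2_def field_simps)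
qed

lemma red2_decomp: obtains m where "x = red2 x + 2 * of_int m"
  by (simp add: red2_def)

lemma red2_add_even: "red2 (x + 2 * of_int m) = red2 x"
proof -
  obtain k where k: "x = red2 x + 2 * of_int k" by (rule red2_decomp)
  have "red2 (x + 2 * of_int m) = (x + 2 * of_int m) - 2 * of_int (k + m)"
    using red2_bounds[of x] k by (intro red2_eqI) (auto simp: algebra_simps)
  thus ?thesis using k by (simp add: algebra_simps)
qed

lemma good_pair_add_even:
  "good_pair (a1 + 2 * of_int m) (a2 + 2 * of_int n) \<longleftrightarrow> good_pair a1 a2"
proof -
  have "a1 + 2 * of_int m - (a2 + 2 * of_int n) = (a1 - a2) + 2 * of_int (m - n)"
    by (simp add: algebra_simps)
  thus ?thesis by (simp only: good_pair_def red2_add_even add_in_Ints_iff_right Ints_mult Ints_of_int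
    Ints_numeral)
qed

lemma nonint_conditions_transform:
  fixes a1 a2 :: real
  shows "(a1 \<notin> \<int> \<and> a2 \<notin> \<int> \<and> a1 - a2 \<notin> \<int>) \<longleftrightarrow>
         (a1 - a2 \<notin> \<int> \<and> a1 - 1 \<notin> \<int> \<and> (a1 - a2) - (a1 - 1) \<notin> \<int>)"
proof -
  have "(a1 - a2) - (a1 - 1) = 1 - a2" by simp
  thus ?thesis by auto
qed

lemma red2_conditions_transform:
  fixes x y :: real
  assumes x: "-1 < x" "x < 1" "x \<noteq> 0"
    and y: "-1 < y" "y < 1" "y \<noteq> 0"
    and xy: "x - y \<noteq> -1" "x - y \<noteq> 1" "x - y \<noteq> 0"
  shows "(x * y > 0 \<and> \<bar>x\<bar> < \<bar>y\<bar>) \<longleftrightarrow>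
         (red2 (x - y) * red2 (x - 1) > 0 \<and> \<bar>red2 (x - y)\<bar> < \<bar>red2 (x - 1)\<bar>)"
proof (cases "x > 0")
  case True
  have x1: "red2 (x - 1) = x - 1" using True x by (intro red2_id) auto
  consider "x - y < 1" | "x - y > 1" using xy by linarith
  thus ?thesis
  proof cases
    case 1
    hence "red2 (x - y) = x - y" using True y by (intro red2_id) auto
    thus ?thesis using x1 True x y xy by (auto simp: abs_if zero_less_mult_iff)
  next
    case 2
    hence "red2 (x - y) = x - y - 2" using red2_eqI[of "x - y" 1] x y by simp
    thus ?thesis using x1 2 x y by (auto simp: abs_if zero_less_mult_iff)
  qed
next
  case False
  hence "x < 0" using x by simp
  have x1: "red2 (x - 1) = x + 1" using red2_eqI[of "x - 1" "-1"] \<open>x < 0\<close> x by simp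
  consider "x - y > -1" | "x - y < -1" using xy by linarith
  thus ?thesis
  proof cases
    case 1
    hence "red2 (x - y) = x - y" using \<open>x < 0\<close> y by (intro red2_id) auto
    thus ?thesis using x1 \<open>x < 0\<close> x y xy by (auto simp: abs_if zero_less_mult_iff)
  next
    case 2
    hence "red2 (x - y) = x - y + 2" using red2_eqI[of "x - y" "-1"] x y by simp
    thus ?thesis using x1 2 \<open>x < 0\<close> x y by (auto simp: abs_if zero_less_mult_iff)
  qed
qed

lemma good_pair_transform_reduced:
  fixes x y :: real
  assumes "-1 \<le> x" "x < 1" "-1 \<le> y" "y < 1"
  shows "good_pair x y \<longleftrightarrow> good_pair (x - y) (x - 1)"
proof (cases "x \<notin> \<int> \<and> y \<notin> \<int> \<and> x - y \<notin> \<int>")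
  case False
  thus ?thesis using nonint_conditions_transform[of x y] unfolding good_pair_def by blast
next
  case True
  hence "x \<noteq> 0" "x \<noteq> -1" "y \<noteq> 0" "y \<noteq> -1" "x - y \<noteq> -1" "x - y \<noteq> 1" "x - y \<noteq> 0"
    by (metis Ints_0 Ints_1 Ints_minus)+
  hence "(x * y > 0 \<and> \<bar>x\<bar> < \<bar>y\<bar>) \<longleftrightarrow>
         (red2 (x - y) * red2 (x - 1) > 0 \<and> \<bar>red2 (x - y)\<bar> < \<bar>red2 (x - 1)\<bar>)"
    using assms by (intro red2_conditions_transform) auto
  thus ?thesis using True nonint_conditions_transform[of x y] assms
    unfolding good_pair_def by (simp add: red2_id)
qed

theorem lemma6p1:
  fixes a1 a2 :: real
  shows "good_pair a1 a2 \<longleftrightarrow> good_pair (a1 - a2) (a1 - 1)"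
proof -
  define x y where "x = red2 a1" and "y = red2 a2"
  obtain m where m: "a1 = x + 2 * of_int m" unfolding x_def by (rule red2_decomp)
  obtain n where n: "a2 = y + 2 * of_int n" unfolding y_def by (rule red2_decomp)
  have "a1 - a2 = (x - y) + 2 * of_int (m - n)" "a1 - 1 = (x - 1) + 2 * of_int m"
    using m n by (simp_all add: algebra_simps)
  hence "good_pair (a1 - a2) (a1 - 1) \<longleftrightarrow> good_pair (x - y) (x - 1)"
    by (simp only: good_pair_add_even)
  also have "\<dots> \<longleftrightarrow> good_pair x y"
    unfolding x_def y_def using red2_bounds by (intro good_pair_transform_reduced[symmetric])
  also have "\<dots> \<longleftrightarrow> good_pair a1 a2"
    using m n good_pair_add_even by simp
  finally show ?thesis ..
qed

end
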